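(* Let $R$ be a finite ring with identity, $\alpha\in(0,1)$, and let $\pi_U$ be the stationary distribution of the Markov chain $(X^U_t)$ on $R$ defined below. Then for every $x\in R$, \[\pi_U(x)=\frac{\alpha+(1-\alpha)\displaystyle\sum_{y\in\phi,\ I_x\subsetneq I_y}|U_y|\,|\mathrm{LAnn}_R(y)|\,\pi_U(y)}{|R|-(1-\alpha)\,|U_x|\,|\mathrm{LAnn}_R(x)|}.\]
   Context: The chain $(X^U_t)$: at each step an independent coin with Heads probability $\alpha$ is tossed; on Heads, $X_{t+1}=X_t+Y$ with $Y$ uniform on $R$; on Tails, $X_{t+1}=Z\cdot X_t$ with $Z$ uniform on $R$ (all independent). $U_R$ is the unit group of $R$. For $a\in R$, $I_a=Ra$ is the principal left ideal generated by $a$; $\phi$ is a fixed set of generators of the distinct principal left ideals of $R$ (one per ideal). $\mathrm{LAnn}_R(y)=\{r\in R\mid ry=0\}$. $\mathrm{LStab}(x)=\{u\in U_R\mid ux=x\}$ and $U_x\subseteq U_R$ is a fixed set of distinct representatives of the left cosets of $\mathrm{LStab}(x)$ in $U_R$ (so $|U_x|=[U_R:\mathrm{LStab}(x)]$). *)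

theory Defs
  imports "HOL-Probability.Probability"
begin

definition chainU_step :: "real \<Rightarrow> 'a::{ring_1,finite} \<Rightarrow> 'a pmf" where
  "chainU_step \<alpha> x =
     bind_pmf (bernoulli_pmf \<alpha>)
       (\<lambda>b. if b then map_pmf (\<lambda>y. x + y) (pmf_of_set UNIV)
             else map_pmf (\<lambda>z. z * x) (pmf_of_set UNIV))"

definition stationaryU :: "real \<Rightarrow> 'a::{ring_1,finite} pmf \<Rightarrow> bool" where
  "stationaryU \<alpha> \<pi> \<longleftrightarrow> bind_pmf \<pi> (chainU_step \<alpha>) = \<pi>"

definition ring_units :: "'a::ring_1 set" where
  "ring_units = {u. \<exists>v. u * v = 1 \<and> v * u = 1}"

definition pl_ideal :: "'a::ring_1 \<Rightarrow> 'a set" where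
  "pl_ideal a = {r * a | r. True}"

definition LAnn :: "'a::ring_1 \<Rightarrow> 'a set" where
  "LAnn y = {r. r * y = 0}"

definition LStab :: "'a::ring_1 \<Rightarrow> 'a set" where
  "LStab x = {u \<in> ring_units. u * x = x}"

text \<open>The set of left cosets of LStab x in U_R; its cardinality is |U_x|.\<close>
definition LStab_cosets :: "'a::ring_1 \<Rightarrow> 'a set set" where
  "LStab_cosets x = (\<lambda>u. (\<lambda>s. u * s) ` LStab x) ` ring_units"

end

theory Submission
  imports Defs
begin

text \<open>Stationarity gives \<open>|R| \<pi>(x) = \<alpha> + (1 - \<alpha>) \<Sum>\<^sub>w \<pi>(w) |{z. z w = x}|\<close>, and
  \<open>{z. z w = x}\<close> is a coset of \<open>LAnn(w)\<close> if \<open>x \<in> R w\<close> and empty otherwise, so only the \<open>w\<close> with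
  \<open>I_x \<subseteq> I_w\<close> contribute. On each class \<open>{w. I_w = I_y}\<close> both \<open>\<pi>\<close> and \<open>|LAnn|\<close> are constant,
  and the class is the orbit \<open>U_R y\<close>, of size \<open>|U_y|\<close>; moving the class of \<open>x\<close> to the left
  gives the formula.

  The one substantial ingredient is that in a finite ring \<open>R a = R b\<close> forces \<open>b = u a\<close> for a
  unit \<open>u\<close>. Writing \<open>b = t a\<close>, \<open>a = s b\<close>, idempotent powers \<open>e\<close> of \<open>s t\<close> and \<open>f\<close> of \<open>t s\<close>
  satisfy \<open>R e \<cong> R f\<close>; a counting argument in the style of Lovasz shows \<open>R (1 - e) \<cong> R (1 - f)\<close>
  as well, and the two isomorphisms add up to a unit.\<close>

section \<open>Isomorphic idempotents\<close>

text \<open>Right multiplications by \<open>p\<close> and \<open>q\<close> are mutually inverse isomorphisms between the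
  left ideals \<open>R e\<close> and \<open>R f\<close> (Murray-von Neumann equivalence); idempotency of \<open>e\<close> and \<open>f\<close>
  follows.\<close>
definition idem_iso :: "'a::ring_1 \<Rightarrow> 'a \<Rightarrow> 'a \<Rightarrow> 'a \<Rightarrow> bool" where
  "idem_iso e f q p \<longleftrightarrow> q * e = q \<and> p * f = p \<and> p * q = e \<and> q * p = f"

lemma idem_iso_idempotent:
  assumes "idem_iso e f q p"
  shows "e * e = e" and "f * f = f"
proof -
  from assms have "q * e = q" "p * f = p" "p * q = e" "q * p = f"
    by (simp_all add: idem_iso_def)
  then show "e * e = e" "f * f = f"
    by (metis mult.assoc)+
qed

lemma idem_iso_absorb:
  assumes "idem_iso e f q p"
  shows "f * q = q" and "e * p = p"
proof -
  from assms have "q * e = q" "p * f = p" "p * q = e" "q * p = f"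
    by (simp_all add: idem_iso_def)
  then show "f * q = q" "e * p = p"
    by (metis mult.assoc)+
qed

lemma mult_idempotent_complement:
  fixes e :: "'a::ring_1"
  assumes "e * e = e"
  shows "e * (1 - e) = 0" and "(1 - e) * e = 0" and "(1 - e) * (1 - e) = 1 - e"
  using assms by (simp_all add: algebra_simps)

lemma idem_iso_add_complement:
  assumes iso: "idem_iso e f q p" and iso': "idem_iso (1 - e) (1 - f) q' p'"
  shows "(q + q') * (p + p') = 1" and "(p + p') * (q + q') = 1" and "(q + q') * e = q"
proof -
  have zero_through: "x * y = 0" if "x * g = x" "h * y = y" "g * h = 0" for x y g h :: 'a
    by (metis that mult.assoc mult_zero_left mult_zero_right)
  note ee = idem_iso_idempotent(1)[OF iso] and ff = idem_iso_idempotent(2)[OF iso]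
  note e0 = mult_idempotent_complement(1,2)[OF ee] and f0 = mult_idempotent_complement(1,2)[OF ff]
  note iso_eqs = iso[unfolded idem_iso_def] iso'[unfolded idem_iso_def]
  note absorb = idem_iso_absorb[OF iso] idem_iso_absorb[OF iso']
  have "q * p' = 0" using zero_through[OF _ _ e0(1)] iso_eqs absorb by blast
  moreover have "q' * p = 0" using zero_through[OF _ _ e0(2)] iso_eqs absorb by blast
  moreover have "p * q' = 0" using zero_through[OF _ _ f0(1)] iso_eqs absorb by blast
  moreover have "p' * q = 0" using zero_through[OF _ _ f0(2)] iso_eqs absorb by blast
  moreover have "q' * e = 0" using zero_through[OF _ ee e0(2)] iso_eqs by blast
  ultimately show "(q + q') * (p + p') = 1" "(p + p') * (q + q') = 1" "(q + q') * e = q"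
    using iso_eqs by (simp_all add: algebra_simps)
qed

section \<open>Cancellation of isomorphic idempotents by counting\<close>

definition right_ideal :: "'a::ring_1 set \<Rightarrow> bool" where
  "right_ideal L \<longleftrightarrow> (\<forall>x\<in>L. \<forall>y\<in>L. x + y \<in> L) \<and> (\<forall>x\<in>L. \<forall>r. x * r \<in> L)"

lemma card_right_ideal_split:
  fixes h :: "'a::{ring_1,finite}"
  assumes L: "right_ideal L" and h: "h * h = h"
  shows "card L = card {x\<in>L. x * h = x} * card {x\<in>L. x * (1 - h) = x}"
proof -
  have "bij_betw (\<lambda>x. (x * h, x * (1 - h))) L ({x\<in>L. x * h = x} \<times> {x\<in>L. x * (1 - h) = x})"
  proof (rule bij_betwI[where g = "\<lambda>(u, v). u + v"])
    show "(\<lambda>x. (x * h, x * (1 - h))) \<in> L \<rightarrow> {x\<in>L. x * h = x} \<times> {x\<in>L. x * (1 - h) = x}"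
      using L mult_idempotent_complement[OF h] h
      by (auto simp: right_ideal_def mult.assoc)
    show "(\<lambda>(u, v). u + v) \<in> {x\<in>L. x * h = x} \<times> {x\<in>L. x * (1 - h) = x} \<rightarrow> L"
      using L by (auto simp: right_ideal_def)
  next
    fix uv assume "uv \<in> {x\<in>L. x * h = x} \<times> {x\<in>L. x * (1 - h) = x}"
    then obtain u v where uv: "uv = (u, v)" "u * h = u" "v * (1 - h) = v" by auto
    have "u * (1 - h) = 0" "v * h = 0"
      using mult_idempotent_complement[OF h] uv(2,3) by (metis mult.assoc mult_zero_right)+
    then show "(\<lambda>x. (x * h, x * (1 - h))) ((\<lambda>(u, v). u + v) uv) = uv"
      using uv by (simp add: distrib_right)
  qed (simp add: algebra_simps)
  then show ?thesis by (simp add: bij_betw_same_card card_cartesian_product)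
qed

lemma card_right_ideal_corner:
  fixes e f q p :: "'a::{ring_1,finite}"
  assumes L: "\<forall>x\<in>L. \<forall>r. x * r \<in> L" and iso: "idem_iso e f q p"
  shows "card {x\<in>L. x * f = x} = card {x\<in>L. x * e = x}"
proof (rule bij_betw_same_card[where f = "\<lambda>x. x * q"],
       rule bij_betwI[where g = "\<lambda>y. y * p"])
  from iso have "q * e = q" "p * f = p" "p * q = e" "q * p = f"
    by (simp_all add: idem_iso_def)
  with L show "(\<lambda>x. x * q) \<in> {x\<in>L. x * f = x} \<rightarrow> {x\<in>L. x * e = x}"
    and "(\<lambda>y. y * p) \<in> {x\<in>L. x * e = x} \<rightarrow> {x\<in>L. x * f = x}"
    and "\<And>x. x \<in> {x\<in>L. x * f = x} \<Longrightarrow> x * q * p = x"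
    and "\<And>y. y \<in> {x\<in>L. x * e = x} \<Longrightarrow> y * p * q = y"
    by (auto simp: mult.assoc)
qed

lemma card_right_ideal_complement_corner:
  fixes e f q p :: "'a::{ring_1,finite}"
  assumes L: "right_ideal L" "0 \<in> L" and iso: "idem_iso e f q p"
  shows "card {x\<in>L. x * (1 - e) = x} = card {x\<in>L. x * (1 - f) = x}"
proof -
  have nonzero: "card {x\<in>L. x * e = x} \<noteq> 0"
    using L(2) by (auto simp: card_eq_0_iff)
  have "card {x\<in>L. x * e = x} * card {x\<in>L. x * (1 - e) = x} = card L"
    using card_right_ideal_split[OF L(1) idem_iso_idempotent(1)[OF iso]] ..
  also have "\<dots> = card {x\<in>L. x * f = x} * card {x\<in>L. x * (1 - f) = x}"
    using card_right_ideal_split[OF L(1) idem_iso_idempotent(2)[OF iso]] .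
  also have "card {x\<in>L. x * f = x} = card {x\<in>L. x * e = x}"
    using card_right_ideal_corner[OF _ iso] L(1) by (simp add: right_ideal_def)
  finally show ?thesis by (simp only: mult_left_cancel[OF nonzero])
qed

lemma card_supersets_decomp:
  fixes K :: "'b \<Rightarrow> 'c set"
  assumes "finite A" "finite S" "\<And>x. K x \<subseteq> A" "N \<subseteq> A"
  shows "card {x\<in>S. N \<subseteq> K x} =
    card {x\<in>S. K x = N} + (\<Sum>M | N \<subset> M \<and> M \<subseteq> A. card {x\<in>S. K x = M})"
proof -
  have "{x\<in>S. N \<subseteq> K x} = (\<Union>M \<in> {M. N \<subseteq> M \<and> M \<subseteq> A}. {x\<in>S. K x = M})"
    using assms(3) by auto
  also have "card \<dots> = (\<Sum>M | N \<subseteq> M \<and> M \<subseteq> A. card {x\<in>S. K x = M})"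
    by (rule card_UN_disjoint) (use assms(1,2) in auto)
  also have "{M. N \<subseteq> M \<and> M \<subseteq> A} = insert N {M. N \<subset> M \<and> M \<subseteq> A}"
    using assms(4) by auto
  finally show ?thesis
    using assms(1) by simp
qed

text \<open>Moebius inversion on the subsets of \<open>A\<close>, as a downward induction on \<open>N\<close>.\<close>
lemma card_level_set_eq_if_card_supersets_eq:
  fixes K :: "'b \<Rightarrow> 'c set"
  assumes fin: "finite A" "finite S" "finite T" and K: "\<And>x. K x \<subseteq> A"
    and supersets: "\<And>N. N \<subseteq> A \<Longrightarrow> card {x\<in>S. N \<subseteq> K x} = card {x\<in>T. N \<subseteq> K x}"
    and "N \<subseteq> A"
  shows "card {x\<in>S. K x = N} = card {x\<in>T. K x = N}"
  using \<open>N \<subseteq> A\<close>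
proof (induction "card (A - N)" arbitrary: N rule: less_induct)
  case less
  have "card {x\<in>S. K x = M} = card {x\<in>T. K x = M}" if "N \<subset> M \<and> M \<subseteq> A" for M
  proof (rule less.hyps)
    show "card (A - M) < card (A - N)"
      using that fin(1) by (intro psubset_card_mono) auto
  qed (use that in simp)
  then have "(\<Sum>M | N \<subset> M \<and> M \<subseteq> A. card {x\<in>S. K x = M}) =
      (\<Sum>M | N \<subset> M \<and> M \<subseteq> A. card {x\<in>T. K x = M})"
    by (intro sum.cong) auto
  then show ?case
    using card_supersets_decomp[OF fin(1,2) K less.prems]
      card_supersets_decomp[OF fin(1,3) K less.prems] supersets[OF less.prems]
    by simp
qed

lemma inj_on_right_mult_iff:
  fixes g x :: "'a::ring_1"
  shows "inj_on (\<lambda>y. y * x) {y. y * g = y} \<longleftrightarrow> {y. y * g = y \<and> y * x = 0} = {0}"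
proof
  assume "inj_on (\<lambda>y. y * x) {y. y * g = y}"
  then show "{y. y * g = y \<and> y * x = 0} = {0}"
    by (auto dest: inj_onD[where y = 0])
next
  assume ker: "{y. y * g = y \<and> y * x = 0} = {0}"
  show "inj_on (\<lambda>y. y * x) {y. y * g = y}"
  proof (rule inj_onI)
    fix y1 y2 assume "y1 \<in> {y. y * g = y}" "y2 \<in> {y. y * g = y}" "y1 * x = y2 * x"
    then have "y1 - y2 \<in> {y. y * g = y \<and> y * x = 0}"
      by (simp add: left_diff_distrib)
    then show "y1 = y2" using ker by simp
  qed
qed

text \<open>Lovasz's counting argument: the numbers of \<open>x\<close> killed by each \<open>N\<close> determine, by
  Moebius inversion, how many \<open>x\<close> make right multiplication injective on \<open>R g\<close>.\<close>
lemma ex_inj_on_right_mult_by_counting: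
  fixes g x0 :: "'a::{ring_1,finite}"
  assumes counts: "\<And>N. N \<subseteq> {y. y * g = y} \<Longrightarrow>
      card {x\<in>S. \<forall>n\<in>N. n * x = 0} = card {x\<in>T. \<forall>n\<in>N. n * x = 0}"
    and "x0 \<in> S" and "inj_on (\<lambda>y. y * x0) {y. y * g = y}"
  obtains x where "x \<in> T" and "inj_on (\<lambda>y. y * x) {y. y * g = y}"
proof -
  define K where "K x = {y. y * g = y \<and> y * x = 0}" for x
  have "card {x\<in>S. K x = {0}} = card {x\<in>T. K x = {0}}"
  proof (rule card_level_set_eq_if_card_supersets_eq[where A = "{y. y * g = y}"])
    fix N assume "N \<subseteq> {y. y * g = y}"
    then have "N \<subseteq> K x \<longleftrightarrow> (\<forall>n\<in>N. n * x = 0)" for x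
      by (auto simp: K_def)
    then show "card {x\<in>S. N \<subseteq> K x} = card {x\<in>T. N \<subseteq> K x}"
      using counts[OF \<open>N \<subseteq> _\<close>] by (simp only:)
  qed (auto simp: K_def)
  moreover have "x0 \<in> {x\<in>S. K x = {0}}"
    using assms(2,3) by (simp add: K_def inj_on_right_mult_iff)
  then have "card {x\<in>S. K x = {0}} \<noteq> 0"
    by (auto simp: card_eq_0_iff)
  ultimately have "{x\<in>T. K x = {0}} \<noteq> {}"
    by (metis card.empty)
  then show ?thesis
    using that by (auto simp: K_def inj_on_right_mult_iff)
qed

lemma idem_iso_of_inj_on_right_mult:
  fixes g h x :: "'a::{ring_1,finite}"
  assumes g: "g * g = g" and h: "h * h = h" and card: "card {y. y * g = y} = card {y. y * h = y}"
    and x: "g * x = x" "x * h = x" and inj: "inj_on (\<lambda>y. y * x) {y. y * g = y}"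
  obtains z where "idem_iso g h z x"
proof -
  have "(\<lambda>y. y * x) ` {y. y * g = y} \<subseteq> {y. y * h = y}"
    using x by (auto simp: mult.assoc)
  then have "(\<lambda>y. y * x) ` {y. y * g = y} = {y. y * h = y}"
    using inj card by (simp add: card_image card_subset_eq)
  then have "h \<in> (\<lambda>y. y * x) ` {y. y * g = y}"
    using h by blast
  then obtain z where z: "z * g = z" "z * x = h"
    by auto
  have "x * z = g"
  proof (rule inj_onD[OF inj])
    show "x * z * x = g * x"
      using x z by (simp add: mult.assoc)
  qed (use z g in \<open>simp_all add: mult.assoc\<close>)
  with x z show ?thesis
    by (intro that[of z]) (simp add: idem_iso_def)
qed

lemma idem_iso_complement:
  fixes e f q p :: "'a::{ring_1,finite}"
  assumes iso: "idem_iso e f q p"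
  obtains q' p' where "idem_iso (1 - e) (1 - f) q' p'"
proof -
  let ?A = "{y. y * (1 - e) = y}"
  have e1: "(1 - e) * (1 - e) = 1 - e" and f1: "(1 - f) * (1 - f) = 1 - f"
    using mult_idempotent_complement(3) idem_iso_idempotent[OF iso] by blast+
  txt \<open>\<open>R e \<cong> R f\<close> cancels from \<open>R e \<oplus> R (1 - e) = R f \<oplus> R (1 - f)\<close> in these counts.\<close>
  have counts: "card {x \<in> {x. (1 - e) * x = x \<and> x * (1 - e) = x}. \<forall>n\<in>N. n * x = 0} =
      card {x \<in> {x. (1 - e) * x = x \<and> x * (1 - f) = x}. \<forall>n\<in>N. n * x = 0}" for N
  proof -
    define L where "L = {x. (1 - e) * x = x \<and> (\<forall>n\<in>N. n * x = 0)}"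
    have "right_ideal L" "0 \<in> L"
      by (auto simp: L_def right_ideal_def distrib_left distrib_right mult.assoc[symmetric])
    from card_right_ideal_complement_corner[OF this iso] show ?thesis
      by (simp add: L_def conj_commute conj_left_commute)
  qed
  obtain x where x: "(1 - e) * x = x" "x * (1 - f) = x" and inj: "inj_on (\<lambda>y. y * x) ?A"
  proof (rule ex_inj_on_right_mult_by_counting[OF counts])
    show "1 - e \<in> {x. (1 - e) * x = x \<and> x * (1 - e) = x}" using e1 by simp
    show "inj_on (\<lambda>y. y * (1 - e)) ?A" by (rule inj_onI) simp
  qed (use that in auto)
  moreover have "card ?A = card {y. y * (1 - f) = y}"
    using card_right_ideal_complement_corner[OF _ _ iso, of UNIV]
    by (simp add: right_ideal_def)
  ultimately show ?thesis
    using idem_iso_of_inj_on_right_mult[OF e1 f1] that by blast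
qed

lemma idem_iso_extends_to_unit:
  fixes e f q p :: "'a::{ring_1,finite}"
  assumes iso: "idem_iso e f q p"
  obtains u where "u \<in> ring_units" and "u * e = q"
proof -
  obtain q' p' where "idem_iso (1 - e) (1 - f) q' p'"
    using idem_iso_complement[OF iso] .
  from idem_iso_add_complement[OF iso this] show ?thesis
    by (intro that[of "q + q'"]) (auto simp: ring_units_def)
qed

section \<open>Associated elements of a finite ring\<close>

lemma finite_monoid_ex_idempotent_power:
  fixes c :: "'a::{monoid_mult,finite}"
  obtains n where "n \<ge> 1" and "c ^ n * c ^ n = c ^ n"
proof -
  have "\<not> inj (\<lambda>i::nat. c ^ i)"
    using finite_imageD[of "\<lambda>i::nat. c ^ i" UNIV] by auto
  then obtain i j :: nat where ij: "i < j" "c ^ i = c ^ j"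
    unfolding inj_def by (metis linorder_neqE_nat)
  define p where "p = j - i"
  have p: "p \<ge> 1" "c ^ (i + p) = c ^ i"
    using ij by (simp_all add: p_def)
  have periodic: "c ^ (m + p * k) = c ^ m" if "m \<ge> i" for m k
  proof (induction k)
    case (Suc k)
    have "c ^ (m + p * Suc k) = c ^ (m - i) * c ^ (i + p) * c ^ (p * k)"
      using that by (simp add: power_add[symmetric] algebra_simps)
    also have "\<dots> = c ^ (m + p * k)"
      using that p(2) by (simp add: power_add[symmetric] algebra_simps)
    finally show ?case using Suc by simp
  qed simp
  define n where "n = p * (i + 1)"
  have "1 * (i + 1) \<le> n"
    unfolding n_def using p(1) by (rule mult_le_mono1)
  then have "i \<le> n" and "n \<ge> 1" by simp_all
  have "c ^ n * c ^ n = c ^ (n + p * (i + 1))"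
    by (simp add: n_def power_add)
  also have "\<dots> = c ^ n"
    using periodic \<open>i \<le> n\<close> by blast
  finally show ?thesis using \<open>n \<ge> 1\<close> that by blast
qed

lemma idempotent_power_eq:
  fixes x :: "'a::monoid_mult"
  assumes "x * x = x" and "k \<ge> 1"
  shows "x ^ k = x"
  using assms(2) by (induction k rule: dec_induct) (simp_all add: assms(1))

lemma finite_monoid_ex_common_idempotent_power:
  fixes c d :: "'a::{monoid_mult,finite}"
  obtains n where "n \<ge> 1" and "c ^ n * c ^ n = c ^ n" and "d ^ n * d ^ n = d ^ n"
proof -
  obtain n1 where n1: "n1 \<ge> 1" "c ^ n1 * c ^ n1 = c ^ n1"
    using finite_monoid_ex_idempotent_power .
  obtain n2 where n2: "n2 \<ge> 1" "d ^ n2 * d ^ n2 = d ^ n2"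
    using finite_monoid_ex_idempotent_power .
  have "c ^ (n1 * n2) = c ^ n1"
    using idempotent_power_eq[OF n1(2) n2(1)] by (simp add: power_mult)
  moreover have "d ^ (n1 * n2) = d ^ n2"
    using idempotent_power_eq[OF n2(2) n1(1)] unfolding mult.commute[of n1] power_mult .
  ultimately show ?thesis
    using n1 n2 by (intro that[of "n1 * n2"]) simp_all
qed

lemma mult_power_mult_commute:
  fixes s t :: "'a::monoid_mult"
  shows "t * (s * t) ^ k = (t * s) ^ k * t"
  by (induction k) (simp_all add: mult.assoc)

lemma idem_iso_idempotent_powers:
  fixes s t :: "'a::ring_1"
  defines "c \<equiv> s * t" and "d \<equiv> t * s"
  assumes ee: "c ^ Suc m * c ^ Suc m = c ^ Suc m" and ff: "d ^ Suc m * d ^ Suc m = d ^ Suc m"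
  shows "idem_iso (c ^ Suc m) (d ^ Suc m) (t * c ^ Suc m) (c ^ m * s * d ^ Suc m)"
proof -
  define e where "e = c ^ Suc m"
  define f where "f = d ^ Suc m"
  define p where "p = c ^ m * s * f"
  have tc: "t * c ^ k = d ^ k * t" for k
    unfolding c_def d_def by (rule mult_power_mult_commute)
  have te: "t * e = f * t"
    unfolding e_def f_def by (rule tc)
  have pow_succ: "c ^ m * c = e" "d ^ m * d = f"
    by (simp_all add: e_def f_def power_commutes)
  have pow_comm: "c ^ m * e = e * c ^ m" "d ^ m * f = f * d ^ m"
    unfolding e_def f_def by (metis power_add add.commute)+
  have "p * (t * e) = c ^ m * s * (f * t) * e"
    by (simp add: p_def mult.assoc)
  also have "\<dots> = c ^ m * c * (e * e)"
    by (simp add: te[symmetric] c_def mult.assoc)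
  finally have pq: "p * (t * e) = e"
    by (simp add: pow_succ(1) ee[folded e_def])
  have "t * e * p = t * (e * c ^ m) * s * f"
    by (simp add: p_def mult.assoc)
  also have "\<dots> = (t * c ^ m) * e * s * f"
    by (metis pow_comm(1) mult.assoc)
  also have "\<dots> = d ^ m * (t * e) * s * f"
    by (simp add: tc mult.assoc)
  also have "\<dots> = (d ^ m * f) * d * f"
    by (simp add: te d_def mult.assoc)
  also have "\<dots> = f * (d ^ m * d) * f"
    by (simp add: pow_comm(2) mult.assoc)
  finally have qp: "t * e * p = f"
    by (simp add: pow_succ(2) ff[folded f_def])
  show ?thesis
    using pq qp ee ff unfolding e_def[symmetric] f_def[symmetric]
    by (simp add: idem_iso_def p_def mult.assoc)
qed

lemma ex_idem_iso_of_factorisation: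
  fixes s t x :: "'a::{ring_1,finite}"
  assumes stx: "s * t * x = x"
  obtains e f p where "idem_iso e f (t * e) p" and "e * x = x"
proof -
  obtain n where n: "n \<ge> 1" "(s * t) ^ n * (s * t) ^ n = (s * t) ^ n"
      "(t * s) ^ n * (t * s) ^ n = (t * s) ^ n"
    using finite_monoid_ex_common_idempotent_power .
  then obtain m where m: "n = Suc m" by (cases n) auto
  have "(s * t) ^ k * x = x" for k
    using stx by (induction k) (simp_all add: mult.assoc)
  moreover have "idem_iso ((s * t) ^ n) ((t * s) ^ n) (t * (s * t) ^ n) ((s * t) ^ m * s * (t * s) ^ n)"
    unfolding m by (rule idem_iso_idempotent_powers[OF n(2,3)[unfolded m]])
  ultimately show ?thesis
    using that by blast
qed

section \<open>Principal left ideals and unit orbits\<close>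

lemma ring_units_mult:
  assumes "u \<in> ring_units" and "v \<in> ring_units"
  shows "u * v \<in> (ring_units :: 'a::ring_1 set)"
proof -
  obtain u' v' where "u * u' = 1" "u' * u = 1" "v * v' = 1" "v' * v = 1"
    using assms by (auto simp: ring_units_def)
  then have "(u * v) * (v' * u') = 1" "(v' * u') * (u * v) = 1"
    by (simp_all add: mult.assoc[symmetric]) (simp_all add: mult.assoc)
  then show ?thesis by (auto simp: ring_units_def)
qed

lemma ring_units_inverse:
  assumes "u \<in> ring_units"
  obtains v where "v \<in> ring_units" "u * v = 1" "v * (u :: 'a::ring_1) = 1"
  using assms by (auto simp: ring_units_def)

lemma mem_pl_ideal_iff:
  fixes w x :: "'a::ring_1"
  shows "x \<in> pl_ideal w \<longleftrightarrow> pl_ideal x \<subseteq> pl_ideal w"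
proof
  assume "x \<in> pl_ideal w"
  then obtain r where "x = r * w" by (auto simp: pl_ideal_def)
  then show "pl_ideal x \<subseteq> pl_ideal w"
    unfolding pl_ideal_def by (auto simp: mult.assoc[symmetric])
next
  assume "pl_ideal x \<subseteq> pl_ideal w"
  moreover have "x \<in> pl_ideal x" by (auto simp: pl_ideal_def intro: exI[of _ 1])
  ultimately show "x \<in> pl_ideal w" by blast
qed

lemma pl_ideal_unit_mult:
  fixes u x :: "'a::ring_1"
  assumes "u \<in> ring_units"
  shows "pl_ideal (u * x) = pl_ideal x"
proof -
  obtain v where "v * u = 1" using assms by (auto simp: ring_units_def)
  then have "x \<in> pl_ideal (u * x)"
    unfolding pl_ideal_def by (auto simp: mult.assoc[symmetric] intro!: exI[of _ v])
  moreover have "u * x \<in> pl_ideal x" by (auto simp: pl_ideal_def)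
  ultimately show ?thesis using mem_pl_ideal_iff by blast
qed

lemma pl_ideal_eq_iff_unit_mult:
  fixes w x :: "'a::{ring_1,finite}"
  shows "pl_ideal w = pl_ideal x \<longleftrightarrow> (\<exists>u\<in>ring_units. w = u * x)"
proof
  assume "pl_ideal w = pl_ideal x"
  then have "w \<in> pl_ideal x" "x \<in> pl_ideal w"
    using mem_pl_ideal_iff by blast+
  then obtain t s where t: "w = t * x" and s: "x = s * w"
    by (auto simp: pl_ideal_def)
  then have "s * t * x = x" by (simp add: mult.assoc)
  then obtain e f p where iso: "idem_iso e f (t * e) p" and ex: "e * x = x"
    by (rule ex_idem_iso_of_factorisation)
  obtain u where "u \<in> ring_units" "u * e = t * e"
    using idem_iso_extends_to_unit[OF iso] .
  moreover have "u * x = w"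
    by (metis ex t \<open>u * e = t * e\<close> mult.assoc)
  ultimately show "\<exists>u\<in>ring_units. w = u * x" by auto
qed (auto simp: pl_ideal_unit_mult)

lemma card_mult_fiber:
  fixes w x :: "'a::{ring_1,finite}"
  shows "card {z. z * w = x} = (if x \<in> pl_ideal w then card (LAnn w) else 0)"
proof (cases "x \<in> pl_ideal w")
  case True
  then obtain r where r: "x = r * w" by (auto simp: pl_ideal_def)
  have "{z. z * w = x} = (\<lambda>l. l + r) ` LAnn w"
  proof (intro equalityI subsetI)
    fix z assume "z \<in> {z. z * w = x}"
    then have "z - r \<in> LAnn w" using r by (simp add: LAnn_def left_diff_distrib)
    then show "z \<in> (\<lambda>l. l + r) ` LAnn w" by (rule rev_image_eqI) simp
  qed (auto simp: LAnn_def distrib_right r)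
  then show ?thesis using True by (simp add: card_image)
next
  case False
  then have "{z. z * w = x} = {}" by (auto simp: pl_ideal_def)
  then show ?thesis using False by simp
qed

lemma card_pl_ideal_mult_card_LAnn:
  fixes x :: "'a::{ring_1,finite}"
  shows "card (pl_ideal x) * card (LAnn x) = CARD('a)"
proof -
  have "CARD('a) = card (\<Union>m\<in>pl_ideal x. {z. z * x = m})"
    by (rule arg_cong[where f = card]) (auto simp: pl_ideal_def)
  also have "\<dots> = (\<Sum>m\<in>pl_ideal x. card {z. z * x = m})"
    by (rule card_UN_disjoint) auto
  also have "\<dots> = card (pl_ideal x) * card (LAnn x)"
    by (simp add: card_mult_fiber)
  finally show ?thesis ..
qed

lemma card_LAnn_eq_if_pl_ideal_eq:
  fixes w x :: "'a::{ring_1,finite}"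
  assumes "pl_ideal w = pl_ideal x"
  shows "card (LAnn w) = card (LAnn x)"
proof -
  have "0 \<in> pl_ideal x" by (auto simp: pl_ideal_def intro: exI[of _ 0])
  then have nonzero: "card (pl_ideal x) \<noteq> 0" by (auto simp: card_eq_0_iff)
  have "card (pl_ideal x) * card (LAnn w) = card (pl_ideal x) * card (LAnn x)"
    using card_pl_ideal_mult_card_LAnn[of w] card_pl_ideal_mult_card_LAnn[of x] assms
    by simp
  then show ?thesis by (simp only: mult_left_cancel[OF nonzero])
qed

lemma LStab_coset_eq:
  fixes u x :: "'a::ring_1"
  assumes u: "u \<in> ring_units"
  shows "(\<lambda>s. u * s) ` LStab x = {v \<in> ring_units. v * x = u * x}"
proof (intro equalityI subsetI)
  fix v assume "v \<in> (\<lambda>s. u * s) ` LStab x"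
  then show "v \<in> {v \<in> ring_units. v * x = u * x}"
    using u by (auto simp: LStab_def ring_units_mult mult.assoc)
next
  fix v assume v: "v \<in> {v \<in> ring_units. v * x = u * x}"
  obtain u' where u': "u' \<in> ring_units" "u * u' = 1" "u' * u = 1"
    using ring_units_inverse[OF u] .
  have "u' * v \<in> LStab x"
    using u' v by (auto simp: LStab_def ring_units_mult mult.assoc simp flip: mult.assoc[of u' u])
  moreover have "v = u * (u' * v)"
    using u' by (simp flip: mult.assoc)
  ultimately show "v \<in> (\<lambda>s. u * s) ` LStab x" by blast
qed

text \<open>Orbit-stabiliser: \<open>|U_x|\<close> is the size of the orbit \<open>U_R x\<close>, which is the whole class of \<open>x\<close>.\<close>
lemma card_LStab_cosets:
  fixes x :: "'a::{ring_1,finite}"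
  shows "card (LStab_cosets x) = card {w. pl_ideal w = pl_ideal x}"
proof -
  have "LStab_cosets x = (\<lambda>y. {v \<in> ring_units. v * x = y}) ` (\<lambda>u. u * x) ` ring_units"
    unfolding LStab_cosets_def image_image by (intro image_cong) (simp_all add: LStab_coset_eq)
  moreover have "inj_on (\<lambda>y. {v \<in> ring_units. v * x = y}) ((\<lambda>u. u * x) ` ring_units)"
    by (rule inj_onI) blast
  moreover have "(\<lambda>u. u * x) ` ring_units = {w. pl_ideal w = pl_ideal x}"
    by (auto simp: pl_ideal_eq_iff_unit_mult)
  ultimately show ?thesis by (simp add: card_image)
qed

lemma card_LStab_cosets_mult_card_LAnn_le:
  fixes x :: "'a::{ring_1,finite}"
  shows "card (LStab_cosets x) * card (LAnn x) \<le> CARD('a)"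
proof -
  have "{w. pl_ideal w = pl_ideal x} \<subseteq> pl_ideal x"
    using mem_pl_ideal_iff by blast
  then have "card (LStab_cosets x) \<le> card (pl_ideal x)"
    by (simp add: card_LStab_cosets card_mono)
  then show ?thesis
    using card_pl_ideal_mult_card_LAnn[of x] by (metis mult_le_mono1)
qed

section \<open>The balance equations of the chain\<close>

lemma pmf_chainU_step:
  fixes \<alpha> :: real and w x :: "'a::{ring_1,finite}"
  assumes "0 \<le> \<alpha>" "\<alpha> \<le> 1"
  shows "pmf (chainU_step \<alpha> w) x = (\<alpha> + (1 - \<alpha>) * real (card {z. z * w = x})) / CARD('a)"
proof -
  have "(\<lambda>y. w + y) -` {x} = {x - w}" by (auto simp: algebra_simps)
  then have add: "pmf (map_pmf (\<lambda>y. w + y) (pmf_of_set UNIV)) x = 1 / CARD('a)"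
    by (simp add: pmf_map measure_pmf_of_set)
  have mult: "pmf (map_pmf (\<lambda>z. z * w) (pmf_of_set UNIV)) x = card {z. z * w = x} / CARD('a)"
    by (simp add: pmf_map measure_pmf_of_set vimage_def)
  have "pmf (chainU_step \<alpha> w) x =
      (\<Sum>b\<in>UNIV. pmf (if b then map_pmf (\<lambda>y. w + y) (pmf_of_set UNIV)
        else map_pmf (\<lambda>z. z * w) (pmf_of_set UNIV)) x * pmf (bernoulli_pmf \<alpha>) b)"
    unfolding chainU_step_def pmf_bind by (rule integral_measure_pmf_real) auto
  then show ?thesis
    using assms by (simp add: UNIV_bool add mult add_divide_distrib)
qed

lemma stationaryU_balance:
  fixes \<alpha> :: real and \<pi> :: "'a::{ring_1,finite} pmf"
  assumes "0 \<le> \<alpha>" "\<alpha> \<le> 1" "stationaryU \<alpha> \<pi>"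
  shows "CARD('a) * pmf \<pi> x = \<alpha> + (1 - \<alpha>) * (\<Sum>w\<in>UNIV. pmf \<pi> w * card {z. z * w = x})"
proof -
  have "pmf \<pi> x = pmf (bind_pmf \<pi> (chainU_step \<alpha>)) x"
    using assms(3) by (simp add: stationaryU_def)
  also have "\<dots> = (\<Sum>w\<in>UNIV. pmf (chainU_step \<alpha> w) x * pmf \<pi> w)"
    unfolding pmf_bind by (rule integral_measure_pmf_real) auto
  also have "\<dots> = (\<Sum>w\<in>UNIV. \<alpha> * pmf \<pi> w + (1 - \<alpha>) * (pmf \<pi> w * card {z. z * w = x})) / CARD('a)"
    unfolding sum_divide_distrib using assms(1,2)
    by (intro sum.cong) (simp_all add: pmf_chainU_step add_divide_distrib algebra_simps)
  also have "\<dots> = (\<alpha> + (1 - \<alpha>) * (\<Sum>w\<in>UNIV. pmf \<pi> w * card {z. z * w = x})) / CARD('a)"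
    by (simp add: sum.distrib sum_pmf_eq_1 flip: sum_distrib_left)
  finally show ?thesis by simp
qed

lemma stationaryU_balance_pl_ideal:
  fixes \<alpha> :: real and \<pi> :: "'a::{ring_1,finite} pmf"
  assumes "0 \<le> \<alpha>" "\<alpha> \<le> 1" "stationaryU \<alpha> \<pi>"
  shows "CARD('a) * pmf \<pi> x =
    \<alpha> + (1 - \<alpha>) * (\<Sum>w | pl_ideal x \<subseteq> pl_ideal w. pmf \<pi> w * card (LAnn w))"
proof -
  have "(\<Sum>w\<in>UNIV. pmf \<pi> w * card {z. z * w = x}) =
      (\<Sum>w\<in>UNIV. if pl_ideal x \<subseteq> pl_ideal w then pmf \<pi> w * card (LAnn w) else 0)"
    by (intro sum.cong) (auto simp: card_mult_fiber mem_pl_ideal_iff)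
  then show ?thesis
    using stationaryU_balance[OF assms, of x] by (simp add: sum.If_cases)
qed

lemma stationaryU_pmf_eq_if_pl_ideal_eq:
  fixes \<alpha> :: real and \<pi> :: "'a::{ring_1,finite} pmf"
  assumes "0 \<le> \<alpha>" "\<alpha> \<le> 1" "stationaryU \<alpha> \<pi>" and "pl_ideal w = pl_ideal x"
  shows "pmf \<pi> w = pmf \<pi> x"
proof -
  have "CARD('a) * pmf \<pi> w = CARD('a) * pmf \<pi> x"
    unfolding stationaryU_balance_pl_ideal[OF assms(1-3)] assms(4) ..
  then show ?thesis by simp
qed

lemma stationaryU_sum_pl_ideal_class:
  fixes \<alpha> :: real and \<pi> :: "'a::{ring_1,finite} pmf"
  assumes "0 \<le> \<alpha>" "\<alpha> \<le> 1" "stationaryU \<alpha> \<pi>"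
  shows "(\<Sum>w | pl_ideal w = pl_ideal y. pmf \<pi> w * card (LAnn w)) =
    card (LStab_cosets y) * card (LAnn y) * pmf \<pi> y"
proof -
  have "(\<Sum>w | pl_ideal w = pl_ideal y. pmf \<pi> w * card (LAnn w)) =
      (\<Sum>w | pl_ideal w = pl_ideal y. pmf \<pi> y * card (LAnn y))"
  proof (rule sum.cong[OF refl])
    fix w assume "w \<in> {w. pl_ideal w = pl_ideal y}"
    then have same: "pl_ideal w = pl_ideal y" by simp
    show "pmf \<pi> w * card (LAnn w) = pmf \<pi> y * card (LAnn y)"
      by (simp only: stationaryU_pmf_eq_if_pl_ideal_eq[OF assms same]
          card_LAnn_eq_if_pl_ideal_eq[OF same])
  qed
  then show ?thesis by (simp add: card_LStab_cosets)
qed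

lemma sum_by_transversal:
  fixes key :: "'a::finite \<Rightarrow> 'b" and g :: "'a \<Rightarrow> 'c::comm_monoid_add"
  assumes transversal: "\<forall>a. \<exists>!y. y \<in> \<phi> \<and> key y = key a"
  shows "(\<Sum>w | P (key w). g w) = (\<Sum>y | y \<in> \<phi> \<and> P (key y). \<Sum>w | key w = key y. g w)"
proof -
  have "{w. P (key w)} = (\<Union>y \<in> {y \<in> \<phi>. P (key y)}. {w. key w = key y})"
  proof (intro equalityI subsetI)
    fix w assume "w \<in> {w. P (key w)}"
    moreover obtain y where "y \<in> \<phi>" "key y = key w"
      using transversal by blast
    ultimately show "w \<in> (\<Union>y \<in> {y \<in> \<phi>. P (key y)}. {w. key w = key y})" by auto
  qed auto
  moreover have "{w. key w = key y1} \<inter> {w. key w = key y2} = {}"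
    if "y1 \<in> \<phi>" "y2 \<in> \<phi>" "y1 \<noteq> y2" for y1 y2
    using transversal[THEN spec, of y1] that by auto
  ultimately show ?thesis
    by (simp add: sum.UNION_disjoint)
qed

lemma stationaryU_balance_transversal:
  fixes \<alpha> :: real and \<pi> :: "'a::{ring_1,finite} pmf"
  assumes "0 \<le> \<alpha>" "\<alpha> \<le> 1" "stationaryU \<alpha> \<pi>"
    and transversal: "\<forall>a. \<exists>!y. y \<in> \<phi> \<and> pl_ideal y = pl_ideal a"
  shows "CARD('a) * pmf \<pi> x = \<alpha> + (1 - \<alpha>) *
    (card (LStab_cosets x) * card (LAnn x) * pmf \<pi> x +
     (\<Sum>y\<in>{y \<in> \<phi>. pl_ideal x \<subset> pl_ideal y}. card (LStab_cosets y) * card (LAnn y) * pmf \<pi> y))"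
proof -
  have "{w. pl_ideal x \<subseteq> pl_ideal w} = {w. pl_ideal w = pl_ideal x} \<union> {w. pl_ideal x \<subset> pl_ideal w}"
    by auto
  then have "(\<Sum>w | pl_ideal x \<subseteq> pl_ideal w. pmf \<pi> w * card (LAnn w)) =
      (\<Sum>w | pl_ideal w = pl_ideal x. pmf \<pi> w * card (LAnn w)) +
      (\<Sum>w | pl_ideal x \<subset> pl_ideal w. pmf \<pi> w * card (LAnn w))"
    by (simp only:) (rule sum.union_disjoint; auto)
  then show ?thesis
    unfolding stationaryU_balance_pl_ideal[OF assms(1-3)]
      sum_by_transversal[OF transversal, where P = "\<lambda>I. pl_ideal x \<subset> I"]
    by (simp add: stationaryU_sum_pl_ideal_class[OF assms(1-3)])
qed

theorem corollary3p3:
  fixes \<alpha> :: real and \<pi> :: "'a::{ring_1,finite} pmf" and \<phi> :: "'a set" and x :: 'a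
  assumes "0 < \<alpha>" and "\<alpha> < 1"
    and "stationaryU \<alpha> \<pi>"
    and "\<forall>a. \<exists>!y. y \<in> \<phi> \<and> pl_ideal y = pl_ideal a"
  shows "pmf \<pi> x =
    (\<alpha> + (1 - \<alpha>) * (\<Sum>y\<in>{y \<in> \<phi>. pl_ideal x \<subset> pl_ideal y}.
        real (card (LStab_cosets y)) * real (card (LAnn y)) * pmf \<pi> y))
    / (real (card (UNIV :: 'a set)) - (1 - \<alpha>) * real (card (LStab_cosets x)) * real (card (LAnn x)))"
proof -
  have \<alpha>: "0 \<le> \<alpha>" "\<alpha> \<le> 1" using assms(1,2) by simp_all
  define N where "N = real (card (LStab_cosets x)) * real (card (LAnn x))"
  define T where "T = (\<Sum>y\<in>{y \<in> \<phi>. pl_ideal x \<subset> pl_ideal y}.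
      real (card (LStab_cosets y)) * real (card (LAnn y)) * pmf \<pi> y)"
  have "N \<le> CARD('a)"
    unfolding N_def of_nat_mult[symmetric] of_nat_le_iff
    by (rule card_LStab_cosets_mult_card_LAnn_le)
  then have "(1 - \<alpha>) * N \<le> (1 - \<alpha>) * CARD('a)"
    using \<alpha> by (intro mult_left_mono) simp_all
  also have "\<dots> < CARD('a)"
    using assms(1) by simp
  finally have "0 < CARD('a) - (1 - \<alpha>) * N" by simp
  moreover have "pmf \<pi> x * (CARD('a) - (1 - \<alpha>) * N) = \<alpha> + (1 - \<alpha>) * T"
    using stationaryU_balance_transversal[OF \<alpha> assms(3,4), of x]
    by (simp add: N_def T_def algebra_simps)
  ultimately show ?thesis
    by (simp add: eq_divide_eq N_def T_def mult.assoc)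
qed

end
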